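(* Let $\mathfrak{g}$ be a non-abelian real Lie algebra of dimension $m=2n$. Then every almost-complex structure on $\mathfrak{g}$ is integrable (i.e. $\mathcal{C}(\mathfrak{g})=\mathcal{C}$) if and only if $\mathfrak{g}$ has a basis $\{e_0,e_1,\dots,e_{m-1}\}$ such that $[e_0,e_i]=e_i=-[e_i,e_0]$ for all $i\ge1$, with all other brackets of basis elements zero.
   Context: $\mathcal{C}$ is the set of linear maps $J\colon\mathfrak{g}\to\mathfrak{g}$ with $J^2=-1$ (almost-complex structures), and $\mathcal{C}(\mathfrak{g})\subseteq\mathcal{C}$ is the subset of those satisfying $[JX,JY]=[X,Y]+J[JX,Y]+J[X,JY]$ for all $X,Y\in\mathfrak{g}$. *)

theory Defs
  imports "HOL-Analysis.Analysis"
begin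

definition lie_algebra :: "('a::real_vector \<Rightarrow> 'a \<Rightarrow> 'a) \<Rightarrow> bool" where
  "lie_algebra br \<longleftrightarrow> bilinear br \<and> (\<forall>x. br x x = 0) \<and>
     (\<forall>x y z. br x (br y z) + br y (br z x) + br z (br x y) = 0)"

definition abelian :: "('a::real_vector \<Rightarrow> 'a \<Rightarrow> 'a) \<Rightarrow> bool" where
  "abelian br \<longleftrightarrow> (\<forall>x y. br x y = 0)"

definition almost_complex_structures :: "('a::real_vector \<Rightarrow> 'a) set" where
  "almost_complex_structures = {J. linear J \<and> (\<forall>x. J (J x) = - x)}"

definition integrable_acs :: "('a::real_vector \<Rightarrow> 'a \<Rightarrow> 'a) \<Rightarrow> ('a \<Rightarrow> 'a) set" where
  "integrable_acs br = {J \<in> almost_complex_structures.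
     \<forall>X Y. br (J X) (J Y) = br X Y + J (br (J X) Y) + J (br X (J Y))}"

end

(*
  If every almost-complex structure is integrable, every plane is a subalgebra.  Otherwise take
  Z = [X, Y] outside span {X, Y} and W outside span {X, Y, Z}, and let J_t send X to t Z and Y to
  t W while agreeing with one fixed pairing of a complementary basis.  Then f o J_t = t g for the
  Z-coordinate f and the X-coordinate g, and the Z-coordinate of the integrability identity
  for J_t reads t^2 c = 1 with c independent of t, which fails for t = 1, 2.

  If every plane is a subalgebra, the coefficient of v in [u, v] does not depend on v, so
  [x, y] = phi x y - phi y x for a linear form phi; for such brackets the integrability identity
  holds for every J.  For phi /= 0, a vector e_0 with phi e_0 = 1 followed by a basis of ker phi is
  exactly the basis of the statement, and conversely phi is the e_0-coordinate of that basis.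
*)

theory Submission
  imports Defs
begin

lemma in_span_pair_iff: "z \<in> span {x, y} \<longleftrightarrow> (\<exists>a b. z = a *\<^sub>R x + b *\<^sub>R y)"
proof -
  have "z \<in> span {x, y} \<longleftrightarrow> (\<exists>a b. z - a *\<^sub>R x = b *\<^sub>R y)"
    by (auto simp: span_insert[of x] span_singleton)
  then show ?thesis by (simp add: diff_eq_eq add.commute)
qed

lemma in_span_pair_Basis_eq:
  fixes u v :: "'a::euclidean_space"
  assumes "u \<in> Basis" "v \<in> Basis" "u \<noteq> v" "z \<in> span {u, v}"
  shows "z = (z \<bullet> u) *\<^sub>R u + (z \<bullet> v) *\<^sub>R v"
  using assms by (auto simp: in_span_pair_iff inner_add_left inner_Basis)

lemma inner_eq_if_in_span_sum_Basis:
  fixes u v w :: "'a::euclidean_space"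
  assumes "u \<in> Basis" "v \<in> Basis" "w \<in> Basis" "u \<noteq> v" "u \<noteq> w" "v \<noteq> w"
    and "z \<in> span {v + w, u}"
  shows "z \<bullet> v = z \<bullet> w"
  using assms by (auto simp: in_span_pair_iff inner_add_left inner_Basis)

lemma inner_Basis_eq_0_if_in_span_pair:
  fixes u v w :: "'a::euclidean_space"
  assumes "u \<in> Basis" "v \<in> Basis" "w \<in> Basis" "w \<noteq> u" "w \<noteq> v" "z \<in> span {u, v}"
  shows "z \<bullet> w = 0"
  using assms by (auto simp: in_span_pair_iff inner_add_left inner_Basis)

lemma alternating_imp_antisym:
  assumes bl: "bilinear br" and alt: "\<And>x. br x x = 0"
  shows "br y x = - br x y"
proof -
  have "br x x + br y x + (br x y + br y y) = br (x + y) (x + y)"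
    by (simp only: bilinear_ladd[OF bl] bilinear_radd[OF bl])
  then have "br y x + br x y = 0" by (simp add: alt)
  then show ?thesis by (simp add: eq_neg_iff_add_eq_0)
qed

lemma alternating_eq_0_if_dependent_pair:
  assumes bl: "bilinear br" and alt: "\<And>x. br x x = 0"
    and dep: "\<not> (independent {x, y} \<and> x \<noteq> y)"
  shows "br x y = 0"
proof (cases "x = y")
  case False
  then have "x \<in> span {y} \<or> y \<in> span {x}"
    using dep unfolding dependent_def by (auto simp: insert_Diff_if)
  then obtain k where "x = k *\<^sub>R y \<or> y = k *\<^sub>R x"
    by (auto simp: span_singleton)
  then show ?thesis
    by (auto simp: bilinear_lmul[OF bl] bilinear_rmul[OF bl] alt)
qed (simp add: alt)

lemma bracket_coeff_eq_if_planes_closed: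
  fixes br :: "'a::euclidean_space \<Rightarrow> 'a \<Rightarrow> 'a"
  assumes bl: "bilinear br" and alt: "\<And>x. br x x = 0"
    and plane: "\<And>x y. br x y \<in> span {x, y}"
    and uvw: "u \<in> Basis" "v \<in> Basis" "w \<in> Basis" "v \<noteq> u" "w \<noteq> u"
  shows "br u v \<bullet> v = br u w \<bullet> w"
proof (cases "v = w")
  case False
  have "br (v + w) u \<bullet> v = br (v + w) u \<bullet> w"
    using inner_eq_if_in_span_sum_Basis[OF uvw(1-3) _ _ False plane] uvw by auto
  moreover have "br (v + w) u = br v u + br w u" by (simp add: bilinear_ladd[OF bl])
  moreover have "br v u \<bullet> w = 0" "br w u \<bullet> v = 0"
    using inner_Basis_eq_0_if_in_span_pair[OF uvw(2,1,3) _ _ plane]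
      inner_Basis_eq_0_if_in_span_pair[OF uvw(3,1,2) _ _ plane] uvw False by auto
  ultimately have "br v u \<bullet> v = br w u \<bullet> w" by (simp add: inner_add_left)
  then show ?thesis
    by (simp add: alternating_imp_antisym[OF bl alt, of u v] alternating_imp_antisym[OF bl alt, of u w])
qed simp

lemma bracket_form_if_planes_closed:
  fixes br :: "'a::euclidean_space \<Rightarrow> 'a \<Rightarrow> 'a"
  assumes bl: "bilinear br" and alt: "\<And>x. br x x = 0"
    and plane: "\<And>x y. br x y \<in> span {x, y}"
  obtains c where "\<And>x y. br x y = (x \<bullet> c) *\<^sub>R y - (y \<bullet> c) *\<^sub>R x"
proof -
  define other where "other u = (SOME v. v \<in> Basis \<and> v \<noteq> u)" for u :: 'a
  \<comment> \<open>\<open>c \<bullet> u\<close> is the common value of \<open>br u v \<bullet> v\<close> over the basis vectors \<open>v \<noteq> u\<close>\<close>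
  define c where "c = (\<Sum>u\<in>Basis. (br u (other u) \<bullet> other u) *\<^sub>R u)"
  have coeff_c: "br u v \<bullet> v = u \<bullet> c" if "u \<in> Basis" "v \<in> Basis" "v \<noteq> u" for u v
  proof -
    have "other u \<in> Basis \<and> other u \<noteq> u"
      unfolding other_def by (rule someI[of _ v]) (use that in auto)
    then show ?thesis
      using that bracket_coeff_eq_if_planes_closed[OF bl alt plane, of u v "other u"]
      by (simp add: c_def inner_sum_right inner_Basis if_distrib cong: if_cong)
  qed
  have "br = (\<lambda>x y. (x \<bullet> c) *\<^sub>R y - (y \<bullet> c) *\<^sub>R x)"
  proof (rule bilinear_eq_stdbasis[OF bl])
    show "bilinear (\<lambda>x y. (x \<bullet> c) *\<^sub>R y - (y \<bullet> c) *\<^sub>R x)"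
      unfolding bilinear_def by (auto intro!: linearI simp: inner_add_left algebra_simps)
  next
    fix u v :: 'a
    assume uv: "u \<in> Basis" "v \<in> Basis"
    show "br u v = (u \<bullet> c) *\<^sub>R v - (v \<bullet> c) *\<^sub>R u"
    proof (cases "u = v")
      case False
      have "br u v \<bullet> u = - (v \<bullet> c)"
        using coeff_c[of v u] uv False by (simp add: alternating_imp_antisym[OF bl alt, of v u])
      then show ?thesis
        using in_span_pair_Basis_eq[OF uv False plane] coeff_c[OF uv] False by (simp add: algebra_simps)
    qed (simp add: alt)
  qed
  then show thesis using that by metis
qed

lemma integrable_acs_of_bracket_form:
  assumes br: "\<And>x y. br x y = \<phi> x *\<^sub>R y - \<phi> y *\<^sub>R x"
  shows "integrable_acs br = almost_complex_structures"
proof -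
  have "J \<in> integrable_acs br" if J: "J \<in> almost_complex_structures" for J
  proof -
    have lin: "linear J" and JJ: "\<And>x. J (J x) = - x"
      using J unfolding almost_complex_structures_def by auto
    show ?thesis
      using J by (simp add: integrable_acs_def br linear_diff[OF lin] linear_cmul[OF lin] JJ algebra_simps)
  qed
  then show ?thesis unfolding integrable_acs_def by auto
qed

definition pairs_up :: "'a set \<Rightarrow> ('a \<Rightarrow> 'a) \<Rightarrow> 'a set \<Rightarrow> bool" where
  "pairs_up A p S \<longleftrightarrow> A \<union> p ` A = S \<and> A \<inter> p ` A = {} \<and> inj_on p A"

lemma pairs_up_if_even_card:
  assumes "finite S" "even (card S)"
  obtains A p where "pairs_up A p S"
proof -
  obtain A where A: "A \<subseteq> S" "card A = card S div 2"
    using obtain_subset_with_card_n[of "card S div 2" S] by auto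
  then have "card (S - A) = card A"
    using assms by (auto simp: card_Diff_subset finite_subset elim!: evenE)
  moreover have "finite A" using A(1) assms(1) by (rule finite_subset)
  ultimately obtain p where "bij_betw p A (S - A)"
    using finite_same_card_bij[of A "S - A"] assms(1) by auto
  then have "pairs_up A p S"
    using A(1) by (auto simp: pairs_up_def bij_betw_def)
  then show thesis by (rule that)
qed

lemma pairs_up_Un:
  assumes "pairs_up A0 p0 S0" and "pairs_up A1 p1 S1" and disj: "S0 \<inter> S1 = {}"
  shows "pairs_up (A0 \<union> A1) (\<lambda>a. if a \<in> A0 then p0 a else p1 a) (S0 \<union> S1)"
    (is "pairs_up _ ?p _")
proof -
  have 0: "A0 \<union> p0 ` A0 = S0" "A0 \<inter> p0 ` A0 = {}" "inj_on p0 A0"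
    and 1: "A1 \<union> p1 ` A1 = S1" "A1 \<inter> p1 ` A1 = {}" "inj_on p1 A1"
    using assms(1,2) unfolding pairs_up_def by auto
  then have "A0 \<inter> A1 = {}" using disj by blast
  then have image_p: "?p ` (A0 \<union> A1) = p0 ` A0 \<union> p1 ` A1"
    unfolding image_Un by (auto intro!: image_cong)
  have "inj_on ?p A0 = inj_on p0 A0" by (rule inj_on_cong) simp
  moreover have "inj_on ?p A1 = inj_on p1 A1"
    by (rule inj_on_cong) (use \<open>A0 \<inter> A1 = {}\<close> in auto)
  moreover have "?p ` (A0 - A1) \<subseteq> S0" "?p ` (A1 - A0) \<subseteq> S1" using 0(1) 1(1) by auto
  ultimately have "inj_on ?p (A0 \<union> A1)"
    unfolding inj_on_Un using 0(3) 1(3) disj by blast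
  moreover have "(A0 \<union> A1) \<union> ?p ` (A0 \<union> A1) = S0 \<union> S1"
    unfolding image_p using 0(1) 1(1) by blast
  moreover have "(A0 \<union> A1) \<inter> ?p ` (A0 \<union> A1) = {}"
    unfolding image_p using 0(1,2) 1(1,2) disj by blast
  ultimately show ?thesis unfolding pairs_up_def by blast
qed

lemma almost_complex_structure_of_pairing:
  fixes T :: "'a::real_vector set"
  assumes pairs: "pairs_up A p T" and indep: "independent T" and spans: "span T = UNIV"
    and s: "\<And>a. a \<in> A \<Longrightarrow> s a \<noteq> 0"
  obtains J where "J \<in> almost_complex_structures"
    and "\<And>a. a \<in> A \<Longrightarrow> J a = s a *\<^sub>R p a"
    and "\<And>a. a \<in> A \<Longrightarrow> J (p a) = - (1 / s a) *\<^sub>R a"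
proof -
  have T: "T = A \<union> p ` A" and disj: "A \<inter> p ` A = {}" and inj: "inj_on p A"
    using pairs unfolding pairs_up_def by auto
  define q where "q = inv_into A p"
  define J0 where "J0 x = (if x \<in> A then s x *\<^sub>R p x else - (1 / s (q x)) *\<^sub>R q x)" for x
  obtain J where lin: "linear J" and J: "\<forall>x \<in> T. J x = J0 x"
    using linear_independent_extend[OF indep, of J0] by blast
  have Ja: "J a = s a *\<^sub>R p a" if "a \<in> A" for a
    using J that by (simp add: T J0_def)
  have Jpa: "J (p a) = - (1 / s a) *\<^sub>R a" if "a \<in> A" for a
    using J that disj inj by (auto simp: T J0_def q_def)
  have "J (J x) = - x" if "x \<in> T" for x
    using that s by (auto simp: T Ja Jpa linear_cmul[OF lin] linear_neg[OF lin])
  then have "J (J x) = - x" for x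
    using linear_eq_on_span[OF linear_compose[OF lin lin] linear_uminus, of T x] spans
    by auto
  then show thesis
    using that lin Ja Jpa unfolding almost_complex_structures_def by blast
qed

lemma extend_to_paired_basis:
  fixes S :: "'a::euclidean_space set"
  assumes pairs: "pairs_up A0 p0 S" and indep: "independent S" and even_dim: "even DIM('a)"
  obtains A p T where "A0 \<subseteq> A" "\<And>a. a \<in> A0 \<Longrightarrow> p a = p0 a"
    "pairs_up A p T" "independent T" "span T = UNIV"
proof -
  obtain T where T: "S \<subseteq> T" "independent T" "span T = UNIV"
    using maximal_independent_subset_extend[OF subset_UNIV indep]
    by (metis span_UNIV span_subspace subspace_span top_greatest)
  have "finite T" using T(2) by (rule finiteI_independent)
  have "card T = DIM('a)"
    using basis_card_eq_dim[of T UNIV] T by (simp add: dim_UNIV)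
  have "finite S" using T(1) \<open>finite T\<close> by (rule finite_subset)
  have "card S = 2 * card A0"
    using pairs card_Un_disjoint[of A0 "p0 ` A0"] card_image[of p0 A0] \<open>finite S\<close>
    unfolding pairs_up_def by auto
  then have "even (card (T - S))"
    using card_Diff_subset[OF \<open>finite S\<close> T(1)] \<open>card T = DIM('a)\<close> even_dim by presburger
  then obtain A1 p1 where "pairs_up A1 p1 (T - S)"
    using pairs_up_if_even_card \<open>finite T\<close> by blast
  moreover have "S \<inter> (T - S) = {}" "S \<union> (T - S) = T" using T(1) by auto
  ultimately have "pairs_up (A0 \<union> A1) (\<lambda>a. if a \<in> A0 then p0 a else p1 a) T"
    using pairs_up_Un[OF pairs, of A1 p1 "T - S"] by simp
  then show thesis
    using that[of "A0 \<union> A1" "\<lambda>a. if a \<in> A0 then p0 a else p1 a" T] T(2,3) by auto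
qed

lemma representation_paired_map:
  fixes T :: "'a::euclidean_space set"
  assumes pairs: "pairs_up A p T" and indep: "independent T" and spans: "span T = UNIV"
    and lin: "linear J" and J: "\<And>a. a \<in> A \<Longrightarrow> J a = s a *\<^sub>R p a"
      "\<And>a. a \<in> A \<Longrightarrow> J (p a) = - (1 / s a) *\<^sub>R a"
    and "a0 \<in> A"
  shows "representation T (J v) (p a0) = s a0 * representation T v a0"
proof (rule linear_eq_on_span[of "\<lambda>v. representation T (J v) (p a0)"
      "\<lambda>v. s a0 * representation T v a0" T])
  have T: "T = A \<union> p ` A" and disj: "A \<inter> p ` A = {}" and inj: "inj_on p A"
    using pairs unfolding pairs_up_def by auto
  have rep: "linear (\<lambda>v. representation T v b)" for b
    using bounded_linear_representation[OF indep spans] bounded_linear.linear by blast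
  show "linear (\<lambda>v. representation T (J v) (p a0))"
    using linear_compose[OF lin rep] by (simp add: o_def)
  show "linear (\<lambda>v. s a0 * representation T v a0)"
    by (auto intro!: linearI simp: linear_add[OF rep] linear_cmul[OF rep] algebra_simps)
  show "v \<in> span T" using spans by simp
  fix b assume "b \<in> T"
  then consider a where "a \<in> A" "b = a" | a where "a \<in> A" "b = p a" by (auto simp: T)
  then show "representation T (J b) (p a0) = s a0 * representation T b a0"
  proof cases
    case (1 a)
    have "p a0 = p a \<longleftrightarrow> a0 = a" using inj \<open>a \<in> A\<close> \<open>a0 \<in> A\<close> by (auto dest: inj_onD)
    moreover have "a \<in> T" "p a \<in> T" using \<open>a \<in> A\<close> by (auto simp: T)
    ultimately show ?thesis
      using 1 J(1) spans by (simp add: representation_scale[OF indep] representation_basis[OF indep])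
  next
    case (2 a)
    have "a \<noteq> p a0" "p a \<noteq> a0" using disj \<open>a \<in> A\<close> \<open>a0 \<in> A\<close> by auto
    moreover have "a \<in> T" "p a \<in> T" using \<open>a \<in> A\<close> by (auto simp: T)
    ultimately show ?thesis
      using 2 J(2) spans
      by (simp add: representation_scale[OF indep] representation_neg[OF indep] representation_basis[OF indep])
  qed
qed

lemma almost_complex_structures_scaling_pairs:
  fixes X Y Z W :: "'a::euclidean_space"
  assumes indep: "independent {X, Y, Z, W}" and dist: "distinct [X, Y, Z, W]"
    and even_dim: "even DIM('a)"
  obtains f g :: "'a \<Rightarrow> real" where "linear f" "linear g" "f Z = 1"
    "\<And>t. t \<noteq> 0 \<Longrightarrow> \<exists>J \<in> almost_complex_structures.
        J X = t *\<^sub>R Z \<and> J Y = t *\<^sub>R W \<and> (\<forall>v. f (J v) = t * g v)"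
proof -
  define p0 where "p0 a = (if a = X then Z else W)" for a
  have "pairs_up {X, Y} p0 {X, Y, Z, W}" using dist by (auto simp: pairs_up_def p0_def)
  then obtain A p T where A: "{X, Y} \<subseteq> A" "\<And>a. a \<in> {X, Y} \<Longrightarrow> p a = p0 a"
      and T: "pairs_up A p T" "independent T" "span T = UNIV"
    using extend_to_paired_basis[OF _ indep even_dim] by blast
  have pXY: "p X = Z" "p Y = W" using A(2) dist by (auto simp: p0_def)
  define f where "f v = representation T v Z" for v
  define g where "g v = representation T v X" for v
  have lin: "linear f" "linear g"
    unfolding f_def g_def using bounded_linear_representation[OF T(2,3)] bounded_linear.linear
    by blast+
  have "Z \<in> T" using T(1) A(1) pXY unfolding pairs_up_def by blast
  then have "f Z = 1" using representation_basis[OF T(2)] by (simp add: f_def)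
  show thesis
  proof (rule that[OF lin \<open>f Z = 1\<close>])
    fix t :: real
    assume "t \<noteq> 0"
    define s where "s a = (if a \<in> {X, Y} then t else 1)" for a
    have "s a \<noteq> 0" for a using \<open>t \<noteq> 0\<close> by (simp add: s_def)
    then obtain J where J: "J \<in> almost_complex_structures"
        "\<And>a. a \<in> A \<Longrightarrow> J a = s a *\<^sub>R p a" "\<And>a. a \<in> A \<Longrightarrow> J (p a) = - (1 / s a) *\<^sub>R a"
      using almost_complex_structure_of_pairing[OF T] by blast
    have "linear J" using J(1) unfolding almost_complex_structures_def by auto
    have "f (J v) = t * g v" for v
      using representation_paired_map[OF T \<open>linear J\<close> J(2,3), of X v] A(1) pXY
      by (simp add: f_def g_def s_def)
    moreover have "J X = t *\<^sub>R Z" "J Y = t *\<^sub>R W" using J(2) A(1) pXY by (auto simp: s_def)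
    ultimately show "\<exists>J \<in> almost_complex_structures.
        J X = t *\<^sub>R Z \<and> J Y = t *\<^sub>R W \<and> (\<forall>v. f (J v) = t * g v)"
      using J(1) by blast
  qed
qed

lemma bracket_in_span_if_all_acs_integrable:
  fixes br :: "'a::euclidean_space \<Rightarrow> 'a \<Rightarrow> 'a"
  assumes bl: "bilinear br" and alt: "\<And>x. br x x = 0" and even_dim: "even DIM('a)"
    and integrable: "integrable_acs br = almost_complex_structures"
  shows "br X Y \<in> span {X, Y}"
proof (rule ccontr)
  define Z where "Z = br X Y"
  assume "br X Y \<notin> span {X, Y}"
  then have Z: "Z \<notin> span {X, Y}" by (simp add: Z_def)
  then have "Z \<noteq> 0" using span_zero by blast
  then have "independent {X, Y}" "X \<noteq> Y"
    using alternating_eq_0_if_dependent_pair[OF bl alt, of X Y] by (auto simp: Z_def)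
  then have indep3: "independent {Z, X, Y}" using Z by (simp add: independent_insertI)
  have "Z \<notin> {X, Y}" using Z by (metis span_base)
  then have "card {Z, X, Y} = 3" using \<open>X \<noteq> Y\<close> by simp
  then have "span {Z, X, Y} \<noteq> UNIV"
    using basis_card_eq_dim[of "{Z, X, Y}" UNIV] indep3 even_dim by (auto simp: dim_UNIV)
  then obtain W where W: "W \<notin> span {Z, X, Y}" by auto
  then have "W \<notin> {Z, X, Y}" by (metis span_base)
  have indep4: "independent {X, Y, Z, W}"
    using independent_insertI[OF W indep3] by (simp add: insert_commute)
  have dist: "distinct [X, Y, Z, W]" using \<open>X \<noteq> Y\<close> \<open>Z \<notin> {X, Y}\<close> \<open>W \<notin> {Z, X, Y}\<close> by auto
  obtain f g :: "'a \<Rightarrow> real" where f: "linear f" and g: "linear g" and "f Z = 1" and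
    J: "\<And>t. t \<noteq> 0 \<Longrightarrow> \<exists>J \<in> almost_complex_structures.
        J X = t *\<^sub>R Z \<and> J Y = t *\<^sub>R W \<and> (\<forall>v. f (J v) = t * g v)"
    using almost_complex_structures_scaling_pairs[OF indep4 dist even_dim] by blast
  have scaling: "t * t * (f (br Z W) - g (br Z Y) - g (br X W)) = 1" if t: "t \<noteq> 0" for t
  proof -
    obtain J where "J \<in> almost_complex_structures" and JXY: "J X = t *\<^sub>R Z" "J Y = t *\<^sub>R W"
      and fJ: "\<forall>v. f (J v) = t * g v"
      using J[OF t] by blast
    then have "J \<in> integrable_acs br" using integrable by simp
    then have "br (J X) (J Y) = br X Y + J (br (J X) Y) + J (br X (J Y))"
      unfolding integrable_acs_def by simp
    then have "f (br (J X) (J Y)) = f (br X Y + J (br (J X) Y) + J (br X (J Y)))" by simp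
    then have "t * t * f (br Z W) = 1 + t * t * g (br Z Y) + t * t * g (br X W)"
      by (simp add: JXY fJ \<open>f Z = 1\<close> Z_def[symmetric] linear_add[OF f] linear_cmul[OF f]
          linear_cmul[OF g] bilinear_lmul[OF bl] bilinear_rmul[OF bl])
    then show ?thesis by (simp add: algebra_simps)
  qed
  from scaling[of 1] scaling[of 2] show False by simp
qed

lemma all_acs_integrable_iff_bracket_form:
  fixes br :: "'a::euclidean_space \<Rightarrow> 'a \<Rightarrow> 'a"
  assumes bl: "bilinear br" and alt: "\<And>x. br x x = 0" and even_dim: "even DIM('a)"
  shows "integrable_acs br = almost_complex_structures \<longleftrightarrow>
    (\<exists>\<phi>. linear \<phi> \<and> (\<forall>x y. br x y = \<phi> x *\<^sub>R y - \<phi> y *\<^sub>R x))"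
proof
  assume "integrable_acs br = almost_complex_structures"
  then obtain c where "\<And>x y. br x y = (x \<bullet> c) *\<^sub>R y - (y \<bullet> c) *\<^sub>R x"
    using bracket_form_if_planes_closed[OF bl alt] bracket_in_span_if_all_acs_integrable[OF bl alt even_dim]
    by metis
  moreover have "linear (\<lambda>x. x \<bullet> c)" by (simp add: bounded_linear.linear bounded_linear_inner_left)
  ultimately show "\<exists>\<phi>. linear \<phi> \<and> (\<forall>x y. br x y = \<phi> x *\<^sub>R y - \<phi> y *\<^sub>R x)" by blast
next
  assume "\<exists>\<phi>. linear \<phi> \<and> (\<forall>x y. br x y = \<phi> x *\<^sub>R y - \<phi> y *\<^sub>R x)"
  then obtain \<phi> where "\<And>x y. br x y = \<phi> x *\<^sub>R y - \<phi> y *\<^sub>R x" by blast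
  then show "integrable_acs br = almost_complex_structures" by (rule integrable_acs_of_bracket_form)
qed

lemma bracket_form_of_basis:
  fixes br :: "'a::euclidean_space \<Rightarrow> 'a \<Rightarrow> 'a" and e :: "nat \<Rightarrow> 'a"
  assumes bl: "bilinear br" and inj: "inj_on e {..<DIM('a)}"
    and indep: "independent (e ` {..<DIM('a)})" and spans: "span (e ` {..<DIM('a)}) = UNIV"
    and brackets_0: "\<forall>i\<in>{1..<DIM('a)}. br (e 0) (e i) = e i \<and> br (e i) (e 0) = - e i"
    and brackets: "\<forall>i<DIM('a). \<forall>j<DIM('a). (i = 0 \<longleftrightarrow> j = 0) \<longrightarrow> br (e i) (e j) = 0"
  shows "\<exists>\<phi>. linear \<phi> \<and> (\<forall>x y. br x y = \<phi> x *\<^sub>R y - \<phi> y *\<^sub>R x)"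
proof -
  let ?E = "e ` {..<DIM('a)}"
  define \<phi> where "\<phi> v = representation ?E v (e 0)" for v
  have "linear \<phi>"
    unfolding \<phi>_def using bounded_linear_representation[OF indep spans] bounded_linear.linear by blast
  have \<phi>_e: "\<phi> (e i) = (if i = 0 then 1 else 0)" if "i < DIM('a)" for i
  proof -
    have "e 0 = e i \<longleftrightarrow> i = 0" using inj that DIM_positive by (auto dest: inj_onD)
    then show ?thesis using representation_basis[OF indep] that by (simp add: \<phi>_def)
  qed
  have "br x y = \<phi> x *\<^sub>R y - \<phi> y *\<^sub>R x" for x y
  proof (rule bilinear_eq[OF bl _ _ _ UNIV_I UNIV_I])
    show "bilinear (\<lambda>x y. \<phi> x *\<^sub>R y - \<phi> y *\<^sub>R x)"
      using \<open>linear \<phi>\<close> unfolding bilinear_def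
      by (auto intro!: linearI simp: linear_add linear_cmul algebra_simps)
    show "UNIV \<subseteq> span ?E" "UNIV \<subseteq> span ?E" using spans by simp_all
    fix u v assume "u \<in> ?E" "v \<in> ?E"
    then obtain i j where "i < DIM('a)" "j < DIM('a)" "u = e i" "v = e j" by auto
    then show "br u v = \<phi> u *\<^sub>R v - \<phi> v *\<^sub>R u"
      using brackets_0 brackets \<phi>_e by (cases "i = 0"; cases "j = 0") auto
  qed
  then show ?thesis using \<open>linear \<phi>\<close> by blast
qed

lemma basis_of_bracket_form:
  fixes br :: "'a::euclidean_space \<Rightarrow> 'a \<Rightarrow> 'a"
  assumes lin: "linear \<phi>" and br: "\<And>x y. br x y = \<phi> x *\<^sub>R y - \<phi> y *\<^sub>R x"
    and nonabelian: "\<not> abelian br"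
  shows "\<exists>e :: nat \<Rightarrow> 'a.
    inj_on e {..<DIM('a)} \<and>
    independent (e ` {..<DIM('a)}) \<and> span (e ` {..<DIM('a)}) = UNIV \<and>
    (\<forall>i\<in>{1..<DIM('a)}. br (e 0) (e i) = e i \<and> br (e i) (e 0) = - e i) \<and>
    (\<forall>i<DIM('a). \<forall>j<DIM('a). (i = 0 \<longleftrightarrow> j = 0) \<longrightarrow> br (e i) (e j) = 0)"
proof -
  obtain x0 where "\<phi> x0 \<noteq> 0" using nonabelian br unfolding abelian_def by fastforce
  define e0 where "e0 = (1 / \<phi> x0) *\<^sub>R x0"
  have "\<phi> e0 = 1" using \<open>\<phi> x0 \<noteq> 0\<close> by (simp add: e0_def linear_cmul[OF lin])
  obtain B where B: "B \<subseteq> {x. \<phi> x = 0}" "independent B" "{x. \<phi> x = 0} \<subseteq> span B"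
    using basis_exists[of "{x. \<phi> x = 0}"] by metis
  have span_B: "span B = {x. \<phi> x = 0}"
    by (rule subset_antisym[OF span_minimal[OF B(1) linear_subspace_kernel[OF lin]] B(3)])
  have "e0 \<notin> span B" using span_B \<open>\<phi> e0 = 1\<close> by simp
  then have "e0 \<notin> B" by (metis span_base)
  define E where "E = insert e0 B"
  have "independent E" using independent_insertI[OF \<open>e0 \<notin> span B\<close> B(2)] by (simp add: E_def)
  have "x \<in> span E" for x
  proof -
    have "x - \<phi> x *\<^sub>R e0 \<in> span B"
      using span_B \<open>\<phi> e0 = 1\<close> by (simp add: linear_diff[OF lin] linear_cmul[OF lin])
    then show ?thesis
      unfolding E_def span_insert by blast
  qed
  then have "span E = UNIV" by auto
  have "finite B" using B(2) by (rule finiteI_independent)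
  have "card E = DIM('a)"
    using basis_card_eq_dim[of E UNIV] \<open>independent E\<close> \<open>span E = UNIV\<close> by (simp add: dim_UNIV)
  then have dim: "DIM('a) = Suc (card B)" using \<open>finite B\<close> \<open>e0 \<notin> B\<close> by (simp add: E_def)
  obtain h where h: "bij_betw h {..<card B} B"
    using ex_bij_betw_nat_finite[OF \<open>finite B\<close>] by (auto simp: atLeast0LessThan)
  define e where "e = case_nat e0 h"
  have image_e: "e ` {..<DIM('a)} = E"
    using bij_betw_imp_surj_on[OF h] unfolding dim lessThan_Suc_eq_insert_0
    by (simp add: e_def E_def image_image)
  have "inj_on e {..<DIM('a)}"
    by (rule eq_card_imp_inj_on) (simp_all add: image_e \<open>card E = DIM('a)\<close>)
  have kernel: "\<phi> (e i) = 0" if i: "i \<in> {1..<DIM('a)}" for i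
  proof -
    obtain k where "i = Suc k" "k < card B" using i dim by (cases i) auto
    then show ?thesis using B(1) bij_betw_apply[OF h] by (auto simp: e_def)
  qed
  have "e 0 = e0" by (simp add: e_def)
  show ?thesis
  proof (intro exI[of _ e] conjI)
    show "independent (e ` {..<DIM('a)})" "span (e ` {..<DIM('a)}) = UNIV"
      using image_e \<open>independent E\<close> \<open>span E = UNIV\<close> by simp_all
    show "\<forall>i\<in>{1..<DIM('a)}. br (e 0) (e i) = e i \<and> br (e i) (e 0) = - e i"
      using kernel by (simp add: br \<open>e 0 = e0\<close> \<open>\<phi> e0 = 1\<close>)
    show "\<forall>i<DIM('a). \<forall>j<DIM('a). (i = 0 \<longleftrightarrow> j = 0) \<longrightarrow> br (e i) (e j) = 0"
      using kernel by (auto simp: br)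
  qed fact
qed

theorem proposition4p1:
  fixes br :: "'a::euclidean_space \<Rightarrow> 'a \<Rightarrow> 'a"
  assumes "lie_algebra br"
    and "\<not> abelian br"
    and "even DIM('a)"
  shows "integrable_acs br = almost_complex_structures \<longleftrightarrow>
    (\<exists>e :: nat \<Rightarrow> 'a.
        inj_on e {..<DIM('a)} \<and>
        independent (e ` {..<DIM('a)}) \<and> span (e ` {..<DIM('a)}) = UNIV \<and>
        (\<forall>i\<in>{1..<DIM('a)}. br (e 0) (e i) = e i \<and> br (e i) (e 0) = - e i) \<and>
        (\<forall>i<DIM('a). \<forall>j<DIM('a). (i = 0 \<longleftrightarrow> j = 0) \<longrightarrow> br (e i) (e j) = 0))"
proof -
  have bl: "bilinear br" and alt: "\<And>x. br x x = 0"
    using assms(1) unfolding lie_algebra_def by auto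
  show ?thesis
    unfolding all_acs_integrable_iff_bracket_form[OF bl alt assms(3)]
    using basis_of_bracket_form[OF _ _ assms(2)] bracket_form_of_basis[OF bl] by blast
qed

end
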